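(* For the game $\mathcal{G}^g_n$ defined in the context, any classical strategy that wins with certainty must broadcast at least $\frac{1}{2}\log_2 n - 2$ bits in the worst case; that is, $B^{\mathrm{cl}}(\mathcal{G}^g_n) \geq \frac{1}{2}\log_2 n - 2$.
   Context: Write $[n]=\{1,\dots,n\}$ and let $\epsilon$ denote the empty string. A game $\mathcal{G}_n$ for $n$ players is a probability distribution over triples $(\sigma,q,W)$, where $\sigma=(G_1,\dots,G_m)$ is a tuple of disjoint sets with union $[n]$ (the groups), $q=(q_1,\dots,q_m)$ is an $m$-tuple of bitstrings (the query), and $W$ is a set of $m$-tuples of bitstrings (allowed answers). Players are arbitrary (possibly probabilistic) information-processing systems with an internal state, producing an output on each new input depending on all inputs so far and the internal state. In a classical strategy the players are classical and their initial internal states have an arbitrary joint distribution. Rules: an instance $(\sigma,q,W)$ is sampled; player $P_i$ belongs to group $G_k$ if $i\in G_k$. The game proceeds in steps; in step 1 every player in $G_k$ receives $q_k$. In each step each player produces an output which is either sent to the players of his own group or broadcast to all $n$ players, and these outputs are inputs in the next step. If $b_{t,i}$ is the (possibly empty) string broadcast by $P_i$ in step $t$, all players receive $\bar b_t = b_{t,1}\|\cdots\|b_{t,n}$ in step $t+1$, and the strings $\bar b_t$ must be self-delimiting (a player reading $\bar b_t$ bitwise can detect where it ends). The game ends when all players are in a halting state, where at most one player of each group $G_k$ specifies a final output string $a_k$ ($a_k=\epsilon$ if none); the game is won if $(a_1,\dots,a_m)\in W$. The group broadcast complexity of a strategy $\tau$ is $B(\mathcal{G}_n,\tau)=\max\sum_t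 |\bar b_t|$, the maximum over all randomness of the players and initial states and over all instances of positive probability. $B^{\mathrm{cl}}(\mathcal{G}_n)$ is the minimum of $B(\mathcal{G}_n,\tau)$ over classical strategies $\tau$ winning $\mathcal{G}_n$ with certainty. For $C=\{c_1,\dots,c_k\}\subseteq[n]$ with $k=|C|$, let $\sigma_C=(\{c_1\},\dots,\{c_k\},[n]\setminus C)$, $q_k=(0,\dots,0,1)$ ($k$ zeros), and $W_k=\{(b_1,\dots,b_k,\epsilon): b_i\in\{0,1\},\ \sum_{i=1}^k b_i\equiv 1 \pmod 2\}$. The game $\mathcal{G}^g_n$ is the uniform distribution over all triples $(\sigma_C,q_{|C|},W_{|C|})$ with $C\subseteq[n]$ and $|C|\equiv 2\pmod 4$. *)

theory Defs
  imports Complex_Main "HOL-Library.Sublist" "HOL-Library.Extended_Real"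
begin

text \<open>Bitstrings are boolean lists.  Players are indexed by 1..n.
A game instance is a triple (sigma, q, W): a list of groups, a list of query strings
(one per group) and a set of allowed answer tuples.\<close>

type_synonym bits = "bool list"
type_synonym game_inst = "nat set list \<times> bits list \<times> bits list set"

text \<open>Output of a player in one step: either a message (flag True = broadcast to all
players, flag False = sent to the own group), or entering the halting state, optionally
specifying a final output string.\<close>
datatype act = Send bool bits | Halt "bits option"

text \<open>Input of a player in one step: in step 1 the query of its group; in step t+1
the messages sent to its group in step t (indexed by sender) and the concatenated
broadcast string of step t.\<close>
datatype inp = Query bits | Recv "nat \<Rightarrow> bits option" bits

datatype 's pst = Run 's | Stop "bits option"

definition grp :: "nat set list \<Rightarrow> nat \<Rightarrow> nat" where
  "grp \<sigma> i = (LEAST k. k < length \<sigma> \<and> i \<in> \<sigma> ! k)"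

definition bcast :: "act \<Rightarrow> bits" where
  "bcast a = (case a of Send True m \<Rightarrow> m | _ \<Rightarrow> [])"

definition bbar :: "nat \<Rightarrow> (nat \<Rightarrow> act) \<Rightarrow> bits" where
  "bbar n acts = concat (map (\<lambda>i. bcast (acts i)) [1..<Suc n])"

definition gmsgs :: "nat set list \<Rightarrow> (nat \<Rightarrow> act) \<Rightarrow> nat \<Rightarrow> nat \<Rightarrow> bits option" where
  "gmsgs \<sigma> acts i = (\<lambda>j. if j \<in> \<sigma> ! grp \<sigma> i
       then (case acts j of Send False m \<Rightarrow> Some m | _ \<Rightarrow> None) else None)"

definition advance :: "(nat \<Rightarrow> 's \<Rightarrow> inp \<Rightarrow> 's \<times> act) \<Rightarrow> nat \<Rightarrow> 's pst \<Rightarrow> inp \<Rightarrow> 's pst \<times> act" where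
  "advance \<delta> i st x = (case st of
      Run s \<Rightarrow> (case \<delta> i s x of
                  (s', Halt out) \<Rightarrow> (Stop out, Halt out)
                | (s', Send b m) \<Rightarrow> (Run s', Send b m))
    | Stop out \<Rightarrow> (Stop out, Halt out))"

text \<open>exec n delta I s0 t = (statuses after step t+1, outputs produced in step t+1).
A (classical) strategy is given by the players' transition functions delta i and the
joint initial internal state s0 (drawn from the support S0 of the initial distribution;
private randomness is part of the initial internal state).\<close>
fun exec :: "nat \<Rightarrow> (nat \<Rightarrow> 's \<Rightarrow> inp \<Rightarrow> 's \<times> act) \<Rightarrow> game_inst \<Rightarrow> (nat \<Rightarrow> 's) \<Rightarrow> nat
             \<Rightarrow> (nat \<Rightarrow> 's pst) \<times> (nat \<Rightarrow> act)" where
  "exec n \<delta> I s0 0 =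
     (\<lambda>i. fst (advance \<delta> i (Run (s0 i)) (Query (fst (snd I) ! grp (fst I) i))),
      \<lambda>i. snd (advance \<delta> i (Run (s0 i)) (Query (fst (snd I) ! grp (fst I) i))))"
| "exec n \<delta> I s0 (Suc t) =
     (case exec n \<delta> I s0 t of (st, acts) \<Rightarrow>
       (\<lambda>i. fst (advance \<delta> i (st i) (Recv (gmsgs (fst I) acts i) (bbar n acts))),
        \<lambda>i. snd (advance \<delta> i (st i) (Recv (gmsgs (fst I) acts i) (bbar n acts)))))"

definition is_stop :: "'s pst \<Rightarrow> bool" where
  "is_stop st = (case st of Stop _ \<Rightarrow> True | Run _ \<Rightarrow> False)"

definition outp :: "'s pst \<Rightarrow> bits option" where
  "outp st = (case st of Stop r \<Rightarrow> r | Run _ \<Rightarrow> None)"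

definition answer :: "nat set list \<Rightarrow> (nat \<Rightarrow> bits option) \<Rightarrow> nat \<Rightarrow> bits" where
  "answer \<sigma> out k = (if \<exists>i\<in>\<sigma> ! k. out i \<noteq> None
       then the (out (SOME i. i \<in> \<sigma> ! k \<and> out i \<noteq> None)) else [])"

definition wins :: "nat \<Rightarrow> (nat \<Rightarrow> 's \<Rightarrow> inp \<Rightarrow> 's \<times> act) \<Rightarrow> game_inst \<Rightarrow> (nat \<Rightarrow> 's) \<Rightarrow> bool" where
  "wins n \<delta> I s0 = (\<exists>T. let st = fst (exec n \<delta> I s0 T); \<sigma> = fst I; W = snd (snd I) in
      (\<forall>i\<in>{1..n}. is_stop (st i))
    \<and> (\<forall>k<length \<sigma>. card {i \<in> \<sigma> ! k. outp (st i) \<noteq> None} \<le> 1)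
    \<and> map (answer \<sigma> (\<lambda>i. outp (st i))) [0..<length \<sigma>] \<in> W)"

text \<open>G is the set of instances of positive probability.\<close>
definition wins_with_certainty ::
  "nat \<Rightarrow> game_inst set \<Rightarrow> (nat \<Rightarrow> 's) set \<Rightarrow> (nat \<Rightarrow> 's \<Rightarrow> inp \<Rightarrow> 's \<times> act) \<Rightarrow> bool" where
  "wins_with_certainty n G S0 \<delta> = (\<forall>I\<in>G. \<forall>s0\<in>S0. wins n \<delta> I s0)"

text \<open>Self-delimiting broadcasts: a running player reading the broadcast string of
step t (knowing its internal state and the group messages of step t) can detect where
it ends, i.e. no possible broadcast string consistent with its knowledge is a proper
prefix of another one.\<close>
definition self_delimiting ::
  "nat \<Rightarrow> game_inst set \<Rightarrow> (nat \<Rightarrow> 's) set \<Rightarrow> (nat \<Rightarrow> 's \<Rightarrow> inp \<Rightarrow> 's \<times> act) \<Rightarrow> bool" where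
  "self_delimiting n G S0 \<delta> = (\<forall>I\<in>G. \<forall>I'\<in>G. \<forall>s0\<in>S0. \<forall>s0'\<in>S0. \<forall>t. \<forall>i\<in>{1..n}. \<forall>s.
      fst (exec n \<delta> I s0 t) i = Run s \<and> fst (exec n \<delta> I' s0' t) i = Run s \<and>
      gmsgs (fst I) (snd (exec n \<delta> I s0 t)) i = gmsgs (fst I') (snd (exec n \<delta> I' s0' t)) i
      \<longrightarrow> \<not> strict_prefix (bbar n (snd (exec n \<delta> I s0 t))) (bbar n (snd (exec n \<delta> I' s0' t))))"

definition broadcast_complexity ::
  "nat \<Rightarrow> game_inst set \<Rightarrow> (nat \<Rightarrow> 's) set \<Rightarrow> (nat \<Rightarrow> 's \<Rightarrow> inp \<Rightarrow> 's \<times> act) \<Rightarrow> enat" where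
  "broadcast_complexity n G S0 \<delta> =
     (SUP I\<in>G. SUP s0\<in>S0. SUP T. enat (\<Sum>t<T. length (bbar n (snd (exec n \<delta> I s0 t)))))"

definition sigmaC :: "nat \<Rightarrow> nat set \<Rightarrow> nat set list" where
  "sigmaC n C = map (\<lambda>c. {c}) (sorted_list_of_set C) @ [{1..n} - C]"

definition qk :: "nat \<Rightarrow> bits list" where
  "qk k = replicate k [False] @ [[True]]"

definition Wk :: "nat \<Rightarrow> bits list set" where
  "Wk k = {map (\<lambda>b. [b]) bs @ [[]] | bs. length bs = k \<and> odd (length (filter id bs))}"

definition gameG :: "nat \<Rightarrow> game_inst set" where
  "gameG n = {(sigmaC n C, qk (card C), Wk (card C)) | C. C \<subseteq> {1..n} \<and> card C mod 4 = 2}"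

end

theory Submission
  imports Defs "HOL-Library.FuncSet" "HOL-Library.Disjoint_Sets"
begin

text \<open>Fix the players' initial state and let B be the broadcast complexity. In the instance
for C, every player of C is alone in its group and receives the query 0, so by self-delimitation
its whole run, and hence its output bit, is determined by its index and the broadcast transcript,
a string of at most B bits. Every one of the 2^(B+1) - 1 possible transcripts thus defines a
parity function on subsets of [n], and each C with |C| = 2 mod 4 has odd parity under one of
them. The sets of even size that have even parity under all these functions form a
GF(2)-subspace K of codimension at most 2^(B+1). No member of K has size 2 mod 4, so all sizes
are divisible by 4 and K is self-orthogonal, whence |K|^2 <= 2^n (eventown). Comparing the two
bounds on |K| gives n <= 2^(B+2).\<close>

lemma card_sym_diff:
  assumes "finite A" "finite B"
  shows "card (sym_diff A B) + 2 * card (A \<inter> B) = card A + card B"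
proof -
  have "card (sym_diff A B) = card (A - B) + card (B - A)"
    by (rule card_Un_disjoint) (use assms in auto)
  moreover have "card A = card (A \<inter> B) + card (A - B)" "card B = card (A \<inter> B) + card (B - A)"
    using card_Int_Diff[OF assms(1), of B] card_Int_Diff[OF assms(2), of A] by (simp_all add: Int_commute)
  ultimately show ?thesis by simp
qed

lemma even_card_sym_diff:
  assumes "finite A" "finite B"
  shows "even (card (sym_diff A B)) \<longleftrightarrow> (even (card A) \<longleftrightarrow> even (card B))"
  using card_sym_diff[OF assms] by (metis even_add even_mult_iff even_numeral)

lemma even_card_filter_sym_diff:
  assumes "finite A" "finite B"
  shows "even (card {a \<in> sym_diff A B. P a})
    \<longleftrightarrow> (even (card {a \<in> A. P a}) \<longleftrightarrow> even (card {a \<in> B. P a}))"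
proof -
  have filter_sym_diff: "{a \<in> sym_diff A B. P a} = sym_diff {a \<in> A. P a} {a \<in> B. P a}"
    by auto
  show ?thesis
    unfolding filter_sym_diff by (rule even_card_sym_diff) (use assms in auto)
qed

lemma sym_diff_cancel_right:
  assumes "sym_diff A C = sym_diff B C"
  shows "A = B"
proof (rule set_eqI)
  fix x
  show "x \<in> A \<longleftrightarrow> x \<in> B"
    using assms[unfolded set_eq_iff, rule_format, of x] by blast
qed

definition parity_perp :: "'a set \<Rightarrow> 'a set set \<Rightarrow> 'a set set" where
  "parity_perp X K = {D \<in> Pow X. \<forall>E\<in>K. even (card (D \<inter> E))}"

lemma sum_parity_character_Pow:
  assumes "finite X" "E \<subseteq> X"
  shows "(\<Sum>D\<in>Pow X. (-1::int) ^ card (D \<inter> E)) = (if E = {} then 2 ^ card X else 0)"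
proof (cases "E = {}")
  case True
  then show ?thesis using assms by (simp add: card_Pow)
next
  case False
  then obtain x where x: "x \<in> E" by auto
  have "(\<Sum>D\<in>Pow X. (-1::int) ^ card (D \<inter> E)) = 0"
  proof (rule sum_involution_eq_0[where h = "\<lambda>D. sym_diff D {x}"])
    fix D assume D: "D \<in> Pow X"
    have fin: "finite (D \<inter> E)" using D assms finite_subset by blast
    have "sym_diff D {x} \<inter> E = sym_diff (D \<inter> E) {x}" using x by auto
    then have "even (card (sym_diff D {x} \<inter> E)) \<longleftrightarrow> odd (card (D \<inter> E))"
      using even_card_sym_diff[OF fin, of "{x}"] by simp
    then show "(-1::int) ^ card (sym_diff D {x} \<inter> E) + (-1) ^ card (D \<inter> E) = 0"
      by (cases "even (card (D \<inter> E))") simp_all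
    show "sym_diff D {x} \<in> Pow X" using D x assms by auto
    show "sym_diff (sym_diff D {x}) {x} = D" by auto
    show "sym_diff D {x} \<noteq> D" by auto
  qed
  then show ?thesis using False by simp
qed

lemma sum_parity_character_closed:
  assumes "finite D" and closed: "\<And>E E'. E \<in> K \<Longrightarrow> E' \<in> K \<Longrightarrow> sym_diff E E' \<in> K"
  shows "(\<Sum>E\<in>K. (-1::int) ^ card (D \<inter> E))
    = (if \<forall>E\<in>K. even (card (D \<inter> E)) then int (card K) else 0)"
proof (cases "\<forall>E\<in>K. even (card (D \<inter> E))")
  case True
  then show ?thesis by simp
next
  case False
  then obtain E0 where E0: "E0 \<in> K" "odd (card (D \<inter> E0))" by auto
  have "(\<Sum>E\<in>K. (-1::int) ^ card (D \<inter> E)) = 0"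
  proof (rule sum_involution_eq_0[where h = "\<lambda>E. sym_diff E E0"])
    fix E assume E: "E \<in> K"
    have "D \<inter> sym_diff E E0 = sym_diff (D \<inter> E) (D \<inter> E0)" by auto
    then have "even (card (D \<inter> sym_diff E E0)) \<longleftrightarrow> odd (card (D \<inter> E))"
      using even_card_sym_diff[of "D \<inter> E" "D \<inter> E0"] E0 \<open>finite D\<close> by simp
    then show "(-1::int) ^ card (D \<inter> sym_diff E E0) + (-1) ^ card (D \<inter> E) = 0"
      by (cases "even (card (D \<inter> E))") simp_all
    show "sym_diff E E0 \<in> K" using closed E E0 by blast
    show "sym_diff (sym_diff E E0) E0 = E" by auto
    have "E0 \<noteq> {}" using E0(2) by auto
    then show "sym_diff E E0 \<noteq> E" by blast
  qed
  then show ?thesis using False by (simp only: if_not_P[OF False] if_False)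
qed

text \<open>Double counting of the character sum over D \<subseteq> X and E \<in> K of (-1)^|D \<inter> E|: summing
over D first leaves only E = {}, summing over E first leaves only D \<in> parity_perp X K.\<close>

lemma card_mult_card_parity_perp:
  assumes "finite X" "K \<subseteq> Pow X" "{} \<in> K"
    and closed: "\<And>E E'. E \<in> K \<Longrightarrow> E' \<in> K \<Longrightarrow> sym_diff E E' \<in> K"
  shows "card K * card (parity_perp X K) = 2 ^ card X"
proof -
  have fin: "finite K" "finite (Pow X)" using assms(1,2) finite_subset by auto
  have "int (2 ^ card X) = (\<Sum>E\<in>K. if E = {} then 2 ^ card X else 0)"
    using fin assms(3) by (simp add: sum.delta')
  also have "\<dots> = (\<Sum>E\<in>K. \<Sum>D\<in>Pow X. (-1::int) ^ card (D \<inter> E))"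
  proof (rule sum.cong)
    fix E assume "E \<in> K"
    then show "(if E = {} then 2 ^ card X else 0) = (\<Sum>D\<in>Pow X. (-1::int) ^ card (D \<inter> E))"
      using assms(2) by (intro sum_parity_character_Pow[symmetric, OF assms(1)]) auto
  qed simp
  also have "\<dots> = (\<Sum>D\<in>Pow X. \<Sum>E\<in>K. (-1::int) ^ card (D \<inter> E))"
    by (rule sum.swap)
  also have "\<dots> = (\<Sum>D\<in>Pow X. if D \<in> parity_perp X K then int (card K) else 0)"
  proof (rule sum.cong)
    fix D assume "D \<in> Pow X"
    then have "finite D" using assms(1) finite_subset by auto
    then show "(\<Sum>E\<in>K. (-1::int) ^ card (D \<inter> E))
        = (if D \<in> parity_perp X K then int (card K) else 0)"
      using \<open>D \<in> Pow X\<close> sum_parity_character_closed[OF _ closed] by (simp add: parity_perp_def)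
  qed simp
  also have "\<dots> = (\<Sum>D\<in>parity_perp X K. int (card K))"
    using fin by (intro sum.mono_neutral_cong_right) (auto simp: parity_perp_def)
  also have "\<dots> = int (card K * card (parity_perp X K))"
    by simp
  finally show ?thesis by linarith
qed

lemma eventown:
  assumes "finite X" "K \<subseteq> Pow X" "{} \<in> K"
    and "\<And>E E'. E \<in> K \<Longrightarrow> E' \<in> K \<Longrightarrow> sym_diff E E' \<in> K"
    and "K \<subseteq> parity_perp X K"
  shows "card K * card K \<le> 2 ^ card X"
proof -
  have "card K \<le> card (parity_perp X K)"
    using assms(1,5) by (intro card_mono) (auto simp: parity_perp_def)
  then show ?thesis using card_mult_card_parity_perp[OF assms(1-4)] by (metis mult_le_mono2)
qed

lemma two_pow_card_le_card_mult_card_fibre: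
  assumes "finite X" "finite Y" "finite K" "\<phi> ` Pow X \<subseteq> Y"
    and fibre: "\<And>D E. D \<subseteq> X \<Longrightarrow> E \<subseteq> X \<Longrightarrow> \<phi> D = \<phi> E \<Longrightarrow> sym_diff D E \<in> K"
  shows "2 ^ card X \<le> card Y * card K"
proof -
  \<comment> \<open>Each fibre of \<phi> lies in a coset of K, so D is determined by \<phi> D and sym_diff D (rep (\<phi> D)).\<close>
  define rep where "rep y = (SOME D. D \<subseteq> X \<and> \<phi> D = y)" for y
  have rep: "rep (\<phi> D) \<subseteq> X \<and> \<phi> (rep (\<phi> D)) = \<phi> D" if "D \<subseteq> X" for D
    unfolding rep_def by (rule someI[of _ D]) (use that in auto)
  define g where "g D = (\<phi> D, sym_diff D (rep (\<phi> D)))" for D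
  have "inj_on g (Pow X)"
  proof
    fix D E assume "g D = g E"
    have "\<phi> D = \<phi> E"
      using arg_cong[OF \<open>g D = g E\<close>, of fst] unfolding g_def by simp
    have same: "sym_diff D (rep (\<phi> D)) = sym_diff E (rep (\<phi> E))"
      using arg_cong[OF \<open>g D = g E\<close>, of snd] unfolding g_def by simp
    have "sym_diff D (rep (\<phi> E)) = sym_diff E (rep (\<phi> E))"
      using same unfolding \<open>\<phi> D = \<phi> E\<close> .
    then show "D = E" by (rule sym_diff_cancel_right)
  qed
  moreover have "g ` Pow X \<subseteq> Y \<times> K"
    using assms(4) rep fibre unfolding g_def by (auto simp: image_subset_iff)
  ultimately have "card (Pow X) \<le> card (Y \<times> K)"
    using assms(2,3) by (intro card_inj_on_le) auto
  then show ?thesis using assms(1) by (simp add: card_Pow card_cartesian_product)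
qed

definition even_parity_sets :: "'a set \<Rightarrow> ('a \<Rightarrow> 'w \<Rightarrow> bool) \<Rightarrow> 'w set \<Rightarrow> 'a set set" where
  "even_parity_sets X F Ws = {D \<in> Pow X. even (card D) \<and> (\<forall>w\<in>Ws. even (card {a \<in> D. F a w}))}"

lemma sym_diff_mem_even_parity_sets:
  assumes "finite X" "D \<in> even_parity_sets X F Ws" "E \<in> even_parity_sets X F Ws"
  shows "sym_diff D E \<in> even_parity_sets X F Ws"
proof -
  have "finite D" "finite E"
    using assms finite_subset unfolding even_parity_sets_def by auto
  then show ?thesis
    using assms(2,3) even_card_sym_diff[of D E] even_card_filter_sym_diff[of D E]
    unfolding even_parity_sets_def by auto
qed

lemma two_pow_card_le_card_even_parity_sets:
  assumes "finite X" "finite Ws"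
  shows "2 ^ card X \<le> 2 ^ (card Ws + 1) * card (even_parity_sets X F Ws)"
proof -
  define \<phi> where "\<phi> D = (restrict (\<lambda>w. even (card {a \<in> D. F a w})) Ws, even (card D))" for D
  have "2 ^ card X \<le> card ((Ws \<rightarrow>\<^sub>E (UNIV :: bool set)) \<times> (UNIV :: bool set)) * card (even_parity_sets X F Ws)"
  proof (rule two_pow_card_le_card_mult_card_fibre[where \<phi> = \<phi>, OF assms(1)])
    show "finite (even_parity_sets X F Ws)"
      using assms(1) unfolding even_parity_sets_def by auto
    show "sym_diff D E \<in> even_parity_sets X F Ws" if "D \<subseteq> X" "E \<subseteq> X" "\<phi> D = \<phi> E" for D E
    proof -
      have "finite D" "finite E" using that assms(1) finite_subset by auto
      have "even (card {a \<in> D. F a w}) \<longleftrightarrow> even (card {a \<in> E. F a w})" if "w \<in> Ws" for w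
        using fun_cong[OF arg_cong[OF \<open>\<phi> D = \<phi> E\<close>, of fst], of w] that by (simp add: \<phi>_def)
      moreover have "even (card D) \<longleftrightarrow> even (card E)"
        using arg_cong[OF \<open>\<phi> D = \<phi> E\<close>, of snd] by (simp add: \<phi>_def)
      ultimately show ?thesis
        using that \<open>finite D\<close> \<open>finite E\<close> even_card_sym_diff[of D E] even_card_filter_sym_diff[of D E]
        unfolding even_parity_sets_def by auto
    qed
  qed (use assms(2) in \<open>auto simp: \<phi>_def finite_PiE\<close>)
  also have "\<dots> = 2 ^ (card Ws + 1) * card (even_parity_sets X F Ws)"
    using assms(2) by (simp add: card_cartesian_product card_PiE)
  finally show ?thesis .
qed

lemma subset_parity_perp_if_card_mod_4:
  assumes "K \<subseteq> Pow X" "finite X"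
    and closed: "\<And>E E'. E \<in> K \<Longrightarrow> E' \<in> K \<Longrightarrow> sym_diff E E' \<in> K"
    and four_dvd: "\<And>D. D \<in> K \<Longrightarrow> card D mod 4 = 0"
  shows "K \<subseteq> parity_perp X K"
proof (unfold parity_perp_def, intro subsetI CollectI conjI ballI)
  fix D E assume "D \<in> K" "E \<in> K"
  then show "D \<in> Pow X" using assms(1) by blast
  have "card (sym_diff D E) + 2 * card (D \<inter> E) = card D + card E"
    using \<open>D \<in> K\<close> \<open>E \<in> K\<close> assms(1,2) by (intro card_sym_diff) (auto intro: finite_subset)
  moreover have "card (sym_diff D E) mod 4 = 0" "card D mod 4 = 0" "card E mod 4 = 0"
    using four_dvd closed \<open>D \<in> K\<close> \<open>E \<in> K\<close> by blast+
  ultimately show "even (card (D \<inter> E))" by presburger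
qed

lemma card_le_of_odd_weight_witnesses:
  assumes "finite X" "finite Ws"
    and witness: "\<And>C. C \<subseteq> X \<Longrightarrow> card C mod 4 = 2 \<Longrightarrow> \<exists>w\<in>Ws. odd (card {a \<in> C. F a w})"
  shows "card X \<le> 2 * card Ws + 2"
proof -
  define K where "K = even_parity_sets X F Ws"
  have KX: "K \<subseteq> Pow X" and "{} \<in> K" unfolding K_def even_parity_sets_def by auto
  have closed: "\<And>D E. D \<in> K \<Longrightarrow> E \<in> K \<Longrightarrow> sym_diff D E \<in> K"
    unfolding K_def using sym_diff_mem_even_parity_sets[OF assms(1)] .
  have "card D mod 4 = 0" if "D \<in> K" for D
  proof -
    have "card D mod 4 \<noteq> 2"
      using witness[of D] that unfolding K_def even_parity_sets_def by auto
    moreover have "even (card D)" using that unfolding K_def even_parity_sets_def by blast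
    ultimately show ?thesis by presburger
  qed
  then have square_bound: "card K * card K \<le> 2 ^ card X"
    using eventown[OF assms(1) KX \<open>{} \<in> K\<close> closed]
      subset_parity_perp_if_card_mod_4[OF KX assms(1) closed] by blast
  have codim: "2 ^ card X \<le> 2 ^ (card Ws + 1) * card K"
    unfolding K_def using two_pow_card_le_card_even_parity_sets[OF assms(1,2)] .
  have "2 ^ card X * 2 ^ card X \<le> (2 ^ (card Ws + 1) * card K) * (2 ^ (card Ws + 1) * card K)"
    using mult_le_mono[OF codim codim] .
  also have "\<dots> = (2 ^ (card Ws + 1) * 2 ^ (card Ws + 1)) * (card K * card K)"
    by (simp only: ac_simps)
  also have "\<dots> \<le> (2 ^ (card Ws + 1) * 2 ^ (card Ws + 1)) * 2 ^ card X"
    using square_bound by (rule mult_le_mono2)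
  finally have "2 ^ card X \<le> (2::nat) ^ (card Ws + 1) * 2 ^ (card Ws + 1)"
    by (simp only: mult_le_cancel2) simp
  also have "\<dots> = 2 ^ (2 * card Ws + 2)"
    by (simp flip: power_add)
  finally show ?thesis
    by (rule power_le_imp_le_exp[rotated]) simp
qed

lemma exec_Suc_state:
  "fst (exec n \<delta> I s0 (Suc t)) i = fst (advance \<delta> i (fst (exec n \<delta> I s0 t) i)
     (Recv (gmsgs (fst I) (snd (exec n \<delta> I s0 t)) i) (bbar n (snd (exec n \<delta> I s0 t)))))"
  by (simp add: split_beta)

lemma exec_Suc_action:
  "snd (exec n \<delta> I s0 (Suc t)) i = snd (advance \<delta> i (fst (exec n \<delta> I s0 t) i)
     (Recv (gmsgs (fst I) (snd (exec n \<delta> I s0 t)) i) (bbar n (snd (exec n \<delta> I s0 t)))))"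
  by (simp add: split_beta)

declare exec.simps(2) [simp del]

lemma is_stop_iff: "is_stop st \<longleftrightarrow> (\<exists>out. st = Stop out)"
  by (cases st) (auto simp: is_stop_def)

lemma exec_Stop_mono:
  assumes "fst (exec n \<delta> I s0 t) i = Stop out" "t \<le> t'"
  shows "fst (exec n \<delta> I s0 t') i = Stop out"
  using assms(2)
proof (induction t' rule: dec_induct)
  case base
  then show ?case using assms(1) .
next
  case (step t')
  then show ?case by (simp add: exec_Suc_state advance_def)
qed

lemma is_stop_exec_mono:
  "is_stop (fst (exec n \<delta> I s0 t) i) \<Longrightarrow> t \<le> t' \<Longrightarrow> is_stop (fst (exec n \<delta> I s0 t') i)"
  using exec_Stop_mono by (metis is_stop_iff)

definition transcript :: "nat \<Rightarrow> (nat \<Rightarrow> 's \<Rightarrow> inp \<Rightarrow> 's \<times> act) \<Rightarrow> game_inst \<Rightarrow> (nat \<Rightarrow> 's) \<Rightarrow> nat \<Rightarrow> bits" where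
  "transcript n \<delta> I s0 T = concat (map (\<lambda>t. bbar n (snd (exec n \<delta> I s0 t))) [0..<T])"

lemma transcript_0 [simp]: "transcript n \<delta> I s0 0 = []"
  by (simp add: transcript_def)

lemma transcript_Suc [simp]:
  "transcript n \<delta> I s0 (Suc t) = transcript n \<delta> I s0 t @ bbar n (snd (exec n \<delta> I s0 t))"
  by (simp add: transcript_def)

lemma prefix_transcript_mono: "t \<le> T \<Longrightarrow> prefix (transcript n \<delta> I s0 t) (transcript n \<delta> I s0 T)"
  by (induction T rule: dec_induct) (auto intro: prefix_order.trans)

lemma length_transcript_le_broadcast_complexity:
  assumes "I \<in> G" "s0 \<in> S0"
  shows "enat (length (transcript n \<delta> I s0 T)) \<le> broadcast_complexity n G S0 \<delta>"
proof -
  have "length (transcript n \<delta> I s0 T) = (\<Sum>t<T. length (bbar n (snd (exec n \<delta> I s0 t))))"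
    by (induction T) simp_all
  then show ?thesis
    unfolding broadcast_complexity_def
    by (intro SUP_upper2[OF assms(1)] SUP_upper2[OF assms(2)] SUP_upper2[of T]) simp_all
qed

lemma gmsgs_singleton_eq:
  assumes "\<sigma> ! grp \<sigma> i = {i}" "\<sigma>' ! grp \<sigma>' i = {i}" "acts i = acts' i"
  shows "gmsgs \<sigma> acts i = gmsgs \<sigma>' acts' i"
  using assms by (auto simp: gmsgs_def fun_eq_iff)

lemma self_delimiting_bbar_eq:
  assumes "self_delimiting n G S0 \<delta>" "I \<in> G" "I' \<in> G" "s0 \<in> S0" "i \<in> {1..n}"
    and "fst (exec n \<delta> I s0 t) i = Run s" "fst (exec n \<delta> I' s0 t) i = Run s"
    and "gmsgs (fst I) (snd (exec n \<delta> I s0 t)) i = gmsgs (fst I') (snd (exec n \<delta> I' s0 t)) i"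
    and "prefix (bbar n (snd (exec n \<delta> I s0 t))) (bbar n (snd (exec n \<delta> I' s0 t)))
      \<or> prefix (bbar n (snd (exec n \<delta> I' s0 t))) (bbar n (snd (exec n \<delta> I s0 t)))"
  shows "bbar n (snd (exec n \<delta> I s0 t)) = bbar n (snd (exec n \<delta> I' s0 t))"
proof -
  have "\<not> strict_prefix (bbar n (snd (exec n \<delta> I s0 t))) (bbar n (snd (exec n \<delta> I' s0 t)))"
    "\<not> strict_prefix (bbar n (snd (exec n \<delta> I' s0 t))) (bbar n (snd (exec n \<delta> I s0 t)))"
    using assms(1-8) unfolding self_delimiting_def by (metis (no_types, lifting))+
  then show ?thesis using assms(9) by (auto simp: strict_prefix_def)
qed

text \<open>The third conjunct is the invariant: while i runs, the transcripts so far agree, so the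
next broadcasts are both prefixes of the common final transcript and self-delimitation makes
them equal.\<close>

lemma singleton_player_run_eq:
  assumes sd: "self_delimiting n G S0 \<delta>"
    and G: "I \<in> G" "I' \<in> G" "s0 \<in> S0" "i \<in> {1..n}"
    and single: "fst I ! grp (fst I) i = {i}" "fst I' ! grp (fst I') i = {i}"
    and query: "fst (snd I) ! grp (fst I) i = fst (snd I') ! grp (fst I') i"
    and stop: "is_stop (fst (exec n \<delta> I s0 T) i)" "is_stop (fst (exec n \<delta> I' s0 T') i)"
    and transcript: "transcript n \<delta> I s0 T = transcript n \<delta> I' s0 T'"
  shows "fst (exec n \<delta> I s0 t) i = fst (exec n \<delta> I' s0 t) i
    \<and> snd (exec n \<delta> I s0 t) i = snd (exec n \<delta> I' s0 t) i
    \<and> (\<not> is_stop (fst (exec n \<delta> I s0 t) i) \<longrightarrow> transcript n \<delta> I s0 t = transcript n \<delta> I' s0 t)"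
proof (induction t)
  case 0
  then show ?case using query by simp
next
  case (Suc t)
  let ?b = "bbar n (snd (exec n \<delta> I s0 t))" and ?b' = "bbar n (snd (exec n \<delta> I' s0 t))"
  have state: "fst (exec n \<delta> I s0 t) i = fst (exec n \<delta> I' s0 t) i"
    and gmsgs: "gmsgs (fst I) (snd (exec n \<delta> I s0 t)) i = gmsgs (fst I') (snd (exec n \<delta> I' s0 t)) i"
    using Suc.IH gmsgs_singleton_eq[OF single] by auto
  show ?case
  proof (cases "fst (exec n \<delta> I s0 t) i")
    case (Stop out)
    then show ?thesis using state by (simp add: exec_Suc_state exec_Suc_action advance_def is_stop_def)
  next
    case (Run s)
    then have running: "\<not> is_stop (fst (exec n \<delta> I s0 t) i)" "\<not> is_stop (fst (exec n \<delta> I' s0 t) i)"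
      using state by (auto simp: is_stop_def)
    then have prev: "transcript n \<delta> I s0 t = transcript n \<delta> I' s0 t"
      using Suc.IH by blast
    have "t < T" "t < T'"
      using running is_stop_exec_mono[OF stop(1)] is_stop_exec_mono[OF stop(2)] by (meson not_less)+
    then have "prefix (transcript n \<delta> I s0 t @ ?b) (transcript n \<delta> I s0 T)"
      "prefix (transcript n \<delta> I s0 t @ ?b') (transcript n \<delta> I s0 T)"
      using prefix_transcript_mono[of "Suc t" T n \<delta> I s0] prefix_transcript_mono[of "Suc t" T' n \<delta> I' s0]
      by (simp_all add: prev transcript)
    then have "prefix ?b ?b' \<or> prefix ?b' ?b"
      using prefix_same_cases by fastforce
    then have "?b = ?b'"
      using self_delimiting_bbar_eq[OF sd G Run] state Run gmsgs by simp
    then show ?thesis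
      using state gmsgs prev by (simp add: exec_Suc_state exec_Suc_action)
  qed
qed

lemma singleton_player_output_eq:
  assumes "self_delimiting n G S0 \<delta>"
    and "I \<in> G" "I' \<in> G" "s0 \<in> S0" "i \<in> {1..n}"
    and "fst I ! grp (fst I) i = {i}" "fst I' ! grp (fst I') i = {i}"
    and "fst (snd I) ! grp (fst I) i = fst (snd I') ! grp (fst I') i"
    and stop: "is_stop (fst (exec n \<delta> I s0 T) i)" "is_stop (fst (exec n \<delta> I' s0 T') i)"
    and "transcript n \<delta> I s0 T = transcript n \<delta> I' s0 T'"
  shows "outp (fst (exec n \<delta> I s0 T) i) = outp (fst (exec n \<delta> I' s0 T') i)"
proof -
  obtain out out' where out: "fst (exec n \<delta> I s0 T) i = Stop out" "fst (exec n \<delta> I' s0 T') i = Stop out'"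
    using stop by (auto simp: is_stop_iff)
  have "fst (exec n \<delta> I s0 (max T T')) i = fst (exec n \<delta> I' s0 (max T T')) i"
    using singleton_player_run_eq[OF assms] by blast
  moreover have "fst (exec n \<delta> I s0 (max T T')) i = Stop out" "fst (exec n \<delta> I' s0 (max T T')) i = Stop out'"
    using exec_Stop_mono[OF out(1)] exec_Stop_mono[OF out(2)] by simp_all
  ultimately show ?thesis using out by (simp add: outp_def)
qed

lemma grp_sigmaC:
  assumes "finite C" "a \<in> C"
  obtains k where "k < card C" "grp (sigmaC n C) a = k" "sorted_list_of_set C ! k = a"
proof -
  define xs where "xs = sorted_list_of_set C"
  have len: "length xs = card C" and "distinct xs" and "set xs = C"
    using assms unfolding xs_def by auto
  obtain k where k: "k < length xs" "xs ! k = a"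
    using assms \<open>set xs = C\<close> by (metis in_set_conv_nth)
  have nth: "sigmaC n C ! j = (if j < length xs then {xs ! j} else {1..n} - C)" if "j \<le> length xs" for j
    using that unfolding sigmaC_def xs_def[symmetric] by (simp add: nth_append)
  have "grp (sigmaC n C) a = k"
    unfolding grp_def
  proof (rule Least_equality)
    show "k < length (sigmaC n C) \<and> a \<in> sigmaC n C ! k"
      using k nth[of k] by (simp add: sigmaC_def xs_def)
  next
    fix j assume j: "j < length (sigmaC n C) \<and> a \<in> sigmaC n C ! j"
    then have "j \<le> length xs" by (simp add: sigmaC_def xs_def)
    then have "j < length xs \<and> xs ! j = a"
      using j nth[of j] assms(2) by (auto split: if_splits)
    then show "k \<le> j"
      using k \<open>distinct xs\<close> nth_eq_iff_index_eq by fastforce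
  qed
  then show ?thesis using that[of k] k len by (simp add: xs_def)
qed

lemma sigmaC_nth: "k < card C \<Longrightarrow> sigmaC n C ! k = {sorted_list_of_set C ! k}"
  by (simp add: sigmaC_def nth_append)

lemma sigmaC_grp:
  assumes "finite C" "a \<in> C"
  shows "sigmaC n C ! grp (sigmaC n C) a = {a}"
  using grp_sigmaC[OF assms] sigmaC_nth by metis

lemma qk_grp_sigmaC:
  assumes "finite C" "a \<in> C"
  shows "qk (card C) ! grp (sigmaC n C) a = [False]"
  using grp_sigmaC[OF assms] by (metis qk_def nth_append length_replicate nth_replicate)

lemma odd_card_True_outputs_of_Wk:
  assumes "finite C" and win: "map (answer (sigmaC n C) out) [0..<length (sigmaC n C)] \<in> Wk (card C)"
  shows "odd (card {a \<in> C. out a = Some [True]})"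
proof -
  define xs where "xs = sorted_list_of_set C"
  have len: "length xs = card C" and "distinct xs" and "set xs = C"
    using assms(1) unfolding xs_def by auto
  obtain bs where bs: "length bs = card C" "odd (length (filter id bs))"
    and answers: "map (answer (sigmaC n C) out) [0..<length (sigmaC n C)] = map (\<lambda>b. [b]) bs @ [[]]"
    using win unfolding Wk_def by auto
  have "out (xs ! k) = Some [bs ! k]" if k: "k < card C" for k
  proof -
    have "answer (sigmaC n C) out k = [bs ! k]"
      using arg_cong[OF answers, of "\<lambda>ys. ys ! k"] k bs(1)
      by (simp add: sigmaC_def nth_append del: upt_Suc)
    moreover have "sigmaC n C ! k = {xs ! k}"
      using k sigmaC_nth xs_def by blast
    moreover have "(SOME i. i \<in> {xs ! k} \<and> out i \<noteq> None) = xs ! k" if "out (xs ! k) \<noteq> None"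
      using that by (intro some_equality) auto
    ultimately show ?thesis
      unfolding answer_def by (cases "out (xs ! k)") auto
  qed
  then have "bs = map (\<lambda>a. out a = Some [True]) xs"
    by (intro nth_equalityI) (auto simp: bs(1) len)
  then have "length (filter id bs) = length (filter (\<lambda>a. out a = Some [True]) xs)"
    by (simp add: filter_map comp_def)
  also have "\<dots> = card {a \<in> C. out a = Some [True]}"
    using \<open>distinct xs\<close> \<open>set xs = C\<close> by (metis distinct_card distinct_filter set_filter)
  finally show ?thesis using bs(2) by simp
qed

definition gameG_inst :: "nat \<Rightarrow> nat set \<Rightarrow> game_inst" where
  "gameG_inst n C = (sigmaC n C, qk (card C), Wk (card C))"

lemma gameG_inst_in_gameG: "C \<subseteq> {1..n} \<Longrightarrow> card C mod 4 = 2 \<Longrightarrow> gameG_inst n C \<in> gameG n"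
  unfolding gameG_inst_def gameG_def by blast

lemma gameG_winning_run:
  assumes "wins_with_certainty n (gameG n) S0 \<delta>" "s0 \<in> S0" "C \<subseteq> {1..n}" "card C mod 4 = 2"
  obtains T where "\<forall>i\<in>{1..n}. is_stop (fst (exec n \<delta> (gameG_inst n C) s0 T) i)"
    and "odd (card {a \<in> C. outp (fst (exec n \<delta> (gameG_inst n C) s0 T) a) = Some [True]})"
proof -
  have "wins n \<delta> (gameG_inst n C) s0"
    using assms gameG_inst_in_gameG unfolding wins_with_certainty_def by blast
  then obtain T where "\<forall>i\<in>{1..n}. is_stop (fst (exec n \<delta> (gameG_inst n C) s0 T) i)"
    and "map (answer (sigmaC n C) (\<lambda>i. outp (fst (exec n \<delta> (gameG_inst n C) s0 T) i)))
      [0..<length (sigmaC n C)] \<in> Wk (card C)"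
    unfolding wins_def Let_def by (auto simp: gameG_inst_def)
  moreover have "finite C" using assms(3) finite_subset by blast
  ultimately show ?thesis using that odd_card_True_outputs_of_Wk by blast
qed

lemma gameG_output_eq:
  assumes "self_delimiting n (gameG n) S0 \<delta>" "s0 \<in> S0"
    and C: "C \<subseteq> {1..n}" "card C mod 4 = 2" "a \<in> C"
    and C': "C' \<subseteq> {1..n}" "card C' mod 4 = 2" "a \<in> C'"
    and stop: "is_stop (fst (exec n \<delta> (gameG_inst n C) s0 T) a)" "is_stop (fst (exec n \<delta> (gameG_inst n C') s0 T') a)"
    and "transcript n \<delta> (gameG_inst n C) s0 T = transcript n \<delta> (gameG_inst n C') s0 T'"
  shows "outp (fst (exec n \<delta> (gameG_inst n C) s0 T) a) = outp (fst (exec n \<delta> (gameG_inst n C') s0 T') a)"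
proof (rule singleton_player_output_eq[OF assms(1) gameG_inst_in_gameG[OF C(1,2)] gameG_inst_in_gameG[OF C'(1,2)] assms(2)])
  have "finite C" "finite C'" using C(1) C'(1) finite_subset by auto
  then show "fst (gameG_inst n C) ! grp (fst (gameG_inst n C)) a = {a}"
    "fst (gameG_inst n C') ! grp (fst (gameG_inst n C')) a = {a}"
    "fst (snd (gameG_inst n C)) ! grp (fst (gameG_inst n C)) a = fst (snd (gameG_inst n C')) ! grp (fst (gameG_inst n C')) a"
    using C(3) C'(3) by (simp_all add: gameG_inst_def sigmaC_grp qk_grp_sigmaC)
  show "a \<in> {1..n}" using C by blast
qed fact+

lemma finite_bits_length_le: "finite {w :: bits. length w \<le> B}"
  using finite_lists_length_le[of "UNIV :: bool set" B] by simp

lemma card_bits_length_le: "card {w :: bits. length w \<le> B} + 1 = 2 ^ (B + 1)"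
proof -
  have "card {w :: bits. length w \<le> B} = 2 ^ (B + 1) - 1"
    using card_lists_length_le[of "UNIV :: bool set" B] sum_power2[of "Suc B"]
    by (simp add: atLeast0LessThan lessThan_Suc_atMost)
  then show ?thesis by simp
qed

lemma players_le_two_pow_broadcast:
  assumes s0: "s0 \<in> S0"
    and win: "wins_with_certainty n (gameG n) S0 \<delta>"
    and sd: "self_delimiting n (gameG n) S0 \<delta>"
    and B: "broadcast_complexity n (gameG n) S0 \<delta> = enat B"
  shows "n \<le> 2 ^ (B + 2)"
proof -
  define st where "st C T = fst (exec n \<delta> (gameG_inst n C) s0 T)" for C T
  \<comment> \<open>By gameG_output_eq, F a w does not depend on the winning run chosen.\<close>
  define F where "F a w \<longleftrightarrow> (\<exists>C T. C \<subseteq> {1..n} \<and> card C mod 4 = 2 \<and> a \<in> C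
      \<and> (\<forall>i\<in>{1..n}. is_stop (st C T i)) \<and> transcript n \<delta> (gameG_inst n C) s0 T = w
      \<and> outp (st C T a) = Some [True])" for a w
  have "card {1..n} \<le> 2 * card {w :: bits. length w \<le> B} + 2"
  proof (rule card_le_of_odd_weight_witnesses[where F = F])
    fix C assume C: "C \<subseteq> {1..n}" "card C mod 4 = 2"
    obtain T where stopped: "\<forall>i\<in>{1..n}. is_stop (st C T i)"
      and odd: "odd (card {a \<in> C. outp (st C T a) = Some [True]})"
      using gameG_winning_run[OF win s0 C] unfolding st_def by blast
    define w where "w = transcript n \<delta> (gameG_inst n C) s0 T"
    have F_iff: "F a w \<longleftrightarrow> outp (st C T a) = Some [True]" if "a \<in> C" for a
    proof
      assume "F a w"
      then obtain C' T' where C': "C' \<subseteq> {1..n}" "card C' mod 4 = 2" "a \<in> C'"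
        and stopped': "\<forall>i\<in>{1..n}. is_stop (st C' T' i)"
        and same: "transcript n \<delta> (gameG_inst n C') s0 T' = w" and "outp (st C' T' a) = Some [True]"
        unfolding F_def by blast
      have "a \<in> {1..n}" using C that by blast
      then have "outp (st C T a) = outp (st C' T' a)"
        using gameG_output_eq[OF sd s0 C that C'] stopped stopped' same
        unfolding st_def w_def by simp
      then show "outp (st C T a) = Some [True]" using \<open>outp (st C' T' a) = Some [True]\<close> by simp
    next
      assume "outp (st C T a) = Some [True]"
      then show "F a w" unfolding F_def w_def using C that stopped by blast
    qed
    have "{a \<in> C. F a w} = {a \<in> C. outp (st C T a) = Some [True]}"
      using F_iff by blast
    moreover have "length w \<le> B"
      using length_transcript_le_broadcast_complexity[OF gameG_inst_in_gameG[OF C] s0, where n = n and \<delta> = \<delta> and T = T] B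
      unfolding w_def by simp
    ultimately show "\<exists>w \<in> {w :: bits. length w \<le> B}. odd (card {a \<in> C. F a w})"
      using odd by auto
  qed (simp_all add: finite_bits_length_le)
  then show ?thesis using card_bits_length_le[of B] by simp
qed

theorem lemma2:
  fixes n :: nat and S0 :: "(nat \<Rightarrow> 's) set" and \<delta> :: "nat \<Rightarrow> 's \<Rightarrow> inp \<Rightarrow> 's \<times> act"
  assumes "2 \<le> n"
    and "S0 \<noteq> {}"
    and "wins_with_certainty n (gameG n) S0 \<delta>"
    and "self_delimiting n (gameG n) S0 \<delta>"
  shows "ereal (log 2 (real n) / 2 - 2) \<le> ereal_of_enat (broadcast_complexity n (gameG n) S0 \<delta>)"
proof (cases "broadcast_complexity n (gameG n) S0 \<delta>")
  case (enat B)
  obtain s0 where "s0 \<in> S0" using assms(2) by auto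
  then have "real n \<le> 2 ^ (B + 2)"
    using players_le_two_pow_broadcast[OF _ assms(3,4) enat]
    by (metis of_nat_le_iff of_nat_numeral of_nat_power)
  then have "log 2 (real n) \<le> log 2 (2 ^ (B + 2))"
    using assms(1) by (subst log_le_cancel_iff) auto
  also have "\<dots> = B + 2"
    by (rule log_pow_cancel) simp_all
  finally show ?thesis using enat by simp
next
  case infinity
  then show ?thesis by simp
qed

end
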